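(* Let $\delta>0$. If the distribution function $F$ of the conductances varies regularly at zero with index $\gamma>0$, then $\mathbb P$-a.s. for all $n$ large enough $\lambda_1^{(n)}\le n^{-\frac1{2\gamma}+\delta}$. If moreover $F(a)=a^\gamma$ for all $a\in[0,1]$, then for every $\epsilon>0$, $\mathbb P$-a.s. for all $n$ large enough $\lambda_1^{(n)}\le 2d\, n^{-\frac1{2\gamma}}\big((2+\epsilon)\log\log n\big)^{\frac1{2d\gamma}}$.
   Context: Let $d\ge 2$, $\mathfrak E_d$ the nearest-neighbour edges of $\mathbb Z^d$, $x\sim y$ if $|x-y|_1=1$. Conductances $(w_e)_{e\in\mathfrak E_d}$ are i.i.d. $(0,\infty)$-valued with law $\mathbb P$, and $F(u)=\mathbb P[w\le u]$. $B_n=[-n,n]^d\cap\mathbb Z^d$. $\mathcal E^{\boldsymbol w}(f)=\frac12\sum_{x}\sum_{y\sim x}w_{xy}(f(x)-f(y))^2$ and $\lambda_1^{(n)}=\inf\{\mathcal E^{\boldsymbol w}(f): f\in\ell^2(\mathbb Z^d)\text{ real},\ \mathrm{supp}\,f\subseteq B_n,\ \|f\|_2=1\}$ (principal Dirichlet eigenvalue of $-\mathcal L_{\boldsymbol w}$, $(\mathcal L_{\boldsymbol w}f)(x)=\sum_{y\sim x}w_{xy}(f(y)-f(x))$, in $B_n$). $F$ varies regularly at zero with index $\gamma$ if $F(u)=u^\gamma L(u)$ with $L(Cu)/L(u)\to1$ as $u\to0$ for all $C>0$. *)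

theory Defs
  imports "HOL-Probability.Probability"
begin

text \<open>Points of Z^d are vectors int^'d, the dimension d being CARD('d).\<close>

definition nn_adj :: "int^'d \<Rightarrow> int^'d \<Rightarrow> bool" where
  "nn_adj x y \<longleftrightarrow> (\<Sum>i\<in>UNIV. \<bar>x$i - y$i\<bar>) = 1"

definition nn_edges :: "(int^'d) set set" where
  "nn_edges = {{x, y} | x y. nn_adj x y}"

definition box :: "nat \<Rightarrow> (int^'d) set" where
  "box n = {x. \<forall>i. \<bar>x$i\<bar> \<le> int n}"

definition dir_energy :: "((int^'d) set \<Rightarrow> real) \<Rightarrow> (int^'d \<Rightarrow> real) \<Rightarrow> real" where
  "dir_energy w f = (1/2) * (\<Sum>\<^sub>\<infinity>x\<in>UNIV. (\<Sum>y\<in>{y. nn_adj x y}. w {x, y} * (f x - f y)^2))"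

text \<open>Principal Dirichlet eigenvalue of the generator in B_n (variational characterisation).\<close>
definition lambda1 :: "((int^'d) set \<Rightarrow> real) \<Rightarrow> nat \<Rightarrow> real" where
  "lambda1 w n = Inf {dir_energy w f | f :: int^'d \<Rightarrow> real.
       (\<forall>x. x \<notin> box n \<longrightarrow> f x = 0) \<and> (\<Sum>\<^sub>\<infinity>x\<in>UNIV. (f x)^2) = 1}"

definition regvar_zero :: "(real \<Rightarrow> real) \<Rightarrow> real \<Rightarrow> bool" where
  "regvar_zero F \<gamma> \<longleftrightarrow> (\<exists>L. (\<forall>u>0. F u = u powr \<gamma> * L u) \<and>
      (\<forall>C>0. ((\<lambda>u. L (C * u) / L u) \<longlongrightarrow> 1) (at_right 0)))"

end

theory Submission
  imports Defs "HOL-Real_Asymp.Real_Asymp"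
begin

text \<open>The principal eigenvalue in \<open>B_n\<close> is at most the energy of the indicator of a single
  site \<open>x \<in> B_n\<close>, i.e. the total conductance of the \<open>2d\<close> edges at \<open>x\<close>; so it suffices to find
  a site all of whose conductances are small. Sites of even coordinate sum are pairwise
  non-adjacent, so their stars of edges are disjoint and independent, and the probability
  that none of the \<open>\<ge> 2^(d-1) m^d\<close> even sites of \<open>B_m\<close> has all its conductances below \<open>a\<close> is at
  most \<open>exp (- 2^(d-1) m^d F(a)^(2d))\<close>. Choosing thresholds \<open>a_k\<close> that make these bounds
  summable along \<open>m = k\<close> (resp. \<open>m = 2^k\<close>), Borel--Cantelli gives the result: for the first
  rate via Potter's bound \<open>F(u) \<ge> c u^(\<gamma>+\<eta>)\<close>, for the second using \<open>F(a) = a^\<gamma>\<close> exactly and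
  interpolating between dyadic scales.\<close>

definition shift :: "int^'d \<Rightarrow> 'd \<Rightarrow> int \<Rightarrow> int^'d" where
  "shift x i s = (\<chi> j. if j = i then x$j + s else x$j)"

lemma nn_adj_sym: "nn_adj x y = nn_adj y x"
  unfolding nn_adj_def by (simp add: abs_minus_commute)

lemma nn_adj_irrefl: "\<not> nn_adj x x"
  unfolding nn_adj_def by simp

lemma nn_adj_shift:
  assumes "s \<in> {-1, 1}" shows "nn_adj x (shift x i s)"
proof -
  have "(\<Sum>j\<in>UNIV. \<bar>x$j - shift x i s $ j\<bar>) = (\<Sum>j\<in>UNIV. if j = i then 1 else 0)"
    by (rule sum.cong) (use assms in \<open>auto simp: shift_def\<close>)
  then show ?thesis unfolding nn_adj_def by simp
qed

lemma nn_adj_imp_shift: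
  assumes "nn_adj x y" obtains i s where "s \<in> {-1, 1}" and "y = shift x i s"
proof -
  define t where "t j = \<bar>x$j - y$j\<bar>" for j
  have sum_t: "(\<Sum>j\<in>UNIV. t j) = 1" using assms unfolding nn_adj_def t_def by simp
  have t_nonneg: "t j \<ge> 0" for j unfolding t_def by simp
  obtain i where "t i \<noteq> 0"
    using sum_t by (metis sum.neutral zero_neq_one)
  have split: "(\<Sum>j\<in>UNIV. t j) = t i + (\<Sum>j\<in>UNIV-{i}. t j)"
    by (simp add: sum.remove)
  have "(\<Sum>j\<in>UNIV-{i}. t j) \<ge> 0" by (rule sum_nonneg) (simp add: t_nonneg)
  then have ti: "t i = 1" and rest: "(\<Sum>j\<in>UNIV-{i}. t j) = 0"
    using sum_t split \<open>t i \<noteq> 0\<close> t_nonneg[of i] by linarith+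
  have others: "t j = 0" if "j \<noteq> i" for j
    using rest sum_nonneg_eq_0_iff[of "UNIV-{i}" t] t_nonneg that by simp
  show ?thesis
  proof
    show "y$i - x$i \<in> {-1, 1}" using ti unfolding t_def by (auto simp: abs_if split: if_splits)
    show "y = shift x i (y$i - x$i)"
      unfolding vec_eq_iff shift_def using others unfolding t_def by auto
  qed
qed

lemma neighbours_eq: "{y. nn_adj x y} = (\<lambda>(i, s). shift x i s) ` (UNIV \<times> {-1, 1})"
  by (auto intro: nn_adj_shift elim!: nn_adj_imp_shift)

lemma finite_neighbours: "finite {y. nn_adj (x::int^'d) y}"
  unfolding neighbours_eq by simp

lemma card_neighbours_le: "card {y. nn_adj (x::int^'d) y} \<le> 2 * CARD('d)"
proof -
  have "card {y. nn_adj x y} \<le> card ((UNIV::'d set) \<times> {-1::int, 1})"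
    unfolding neighbours_eq by (intro card_image_le) auto
  also have "\<dots> = 2 * CARD('d)" by (simp add: card_cartesian_product)
  finally show ?thesis .
qed

lemma neighbours_nonempty: "{y. nn_adj (x::int^'d) y} \<noteq> {}"
  using nn_adj_shift[of 1 x undefined] by auto

lemma sum_shift: "(\<Sum>j\<in>UNIV. shift x i s $ j) = (\<Sum>j\<in>UNIV. x$j) + s"
proof -
  have "(\<Sum>j\<in>UNIV. shift x i s $ j) = (\<Sum>j\<in>UNIV. x$j + (if j = i then s else 0))"
    by (rule sum.cong) (auto simp: shift_def)
  then show ?thesis by (simp add: sum.distrib)
qed

lemma nn_adj_odd_coordinate_sum:
  assumes "nn_adj x y" shows "odd ((\<Sum>j\<in>UNIV. x$j) + (\<Sum>j\<in>UNIV. y$j))"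
proof -
  obtain i s where "s \<in> {-1, 1}" and "y = shift x i s"
    using assms by (rule nn_adj_imp_shift)
  then show ?thesis by (auto simp: sum_shift)
qed

lemma dir_energy_nonneg:
  assumes "\<And>x y. nn_adj x y \<Longrightarrow> w {x, y} \<ge> 0"
  shows "dir_energy w f \<ge> 0"
  unfolding dir_energy_def using assms
  by (intro mult_nonneg_nonneg infsum_nonneg sum_nonneg) auto

lemma dir_energy_indicator:
  fixes x :: "int^'d"
  shows "dir_energy w (\<lambda>z. if z = x then 1 else 0) = (\<Sum>y\<in>{y. nn_adj x y}. w {x, y})"
proof -
  define S where "S = (\<Sum>y\<in>{y. nn_adj x y}. w {x, y})"
  define g where "g z = (\<Sum>y\<in>{y. nn_adj z y}.
      w {z, y} * ((if z = x then 1 else 0) - (if y = x then 1 else 0))^2)" for z :: "int^'d"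
  have g: "g z = (if z = x then S else if nn_adj x z then w {x, z} else 0)" for z
  proof (cases "z = x")
    case True
    then show ?thesis unfolding g_def S_def
      by (auto intro!: sum.cong simp: nn_adj_irrefl)
  next
    case False
    then have "g z = (\<Sum>y\<in>{y. nn_adj z y}. if y = x then w {z, y} else 0)"
      unfolding g_def by (intro sum.cong) auto
    also have "\<dots> = (if nn_adj x z then w {x, z} else 0)"
      using finite_neighbours[of z] by (simp add: nn_adj_sym insert_commute)
    finally show ?thesis using False by simp
  qed
  have "(\<Sum>\<^sub>\<infinity>z\<in>UNIV. g z) = (\<Sum>\<^sub>\<infinity>z\<in>insert x {y. nn_adj x y}. g z)"
    by (rule infsum_cong_neutral) (auto simp: g)
  also have "\<dots> = g x + (\<Sum>z\<in>{y. nn_adj x y}. g z)"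
    using finite_neighbours[of x] by (simp add: nn_adj_irrefl)
  also have "\<dots> = 2 * S"
  proof -
    have "(\<Sum>z\<in>{y. nn_adj x y}. g z) = S"
      unfolding S_def by (rule sum.cong) (auto simp: g nn_adj_irrefl)
    then show ?thesis by (simp add: g)
  qed
  finally show ?thesis unfolding dir_energy_def g_def S_def by simp
qed

lemma lambda1_le_conductance_bound:
  fixes w :: "(int^'d) set \<Rightarrow> real" and x :: "int^'d"
  assumes nonneg: "\<And>x y. nn_adj x y \<Longrightarrow> w {x, y} \<ge> 0"
    and "x \<in> box n"
    and le: "\<And>y. nn_adj x y \<Longrightarrow> w {x, y} \<le> a"
  shows "lambda1 w n \<le> 2 * real CARD('d) * a"
proof -
  define ind where "ind = (\<lambda>z::int^'d. if z = x then 1 else (0::real))"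
  have "(\<Sum>\<^sub>\<infinity>z\<in>UNIV. (ind z)^2) = (\<Sum>\<^sub>\<infinity>z\<in>{x}. (ind z)^2)"
    by (rule infsum_cong_neutral) (auto simp: ind_def)
  then have "(\<Sum>\<^sub>\<infinity>z\<in>UNIV. (ind z)^2) = 1" by (simp add: ind_def)
  moreover have "dir_energy w f \<ge> 0" for f using nonneg by (rule dir_energy_nonneg)
  ultimately have "lambda1 w n \<le> dir_energy w ind"
    unfolding lambda1_def using \<open>x \<in> box n\<close>
    by (intro cInf_lower bdd_belowI[of _ 0]) (auto simp: ind_def)
  also have "\<dots> = (\<Sum>y\<in>{y. nn_adj x y}. w {x, y})"
    unfolding ind_def by (rule dir_energy_indicator)
  also have "\<dots> \<le> real (card {y. nn_adj x y}) * a"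
    using sum_bounded_above[of "{y. nn_adj x y}" "\<lambda>y. w {x, y}" a] le by simp
  also have "\<dots> \<le> 2 * real CARD('d) * a"
  proof -
    obtain y where "nn_adj x y" using neighbours_nonempty[of x] by auto
    then have "a \<ge> 0" using nonneg le by force
    moreover have "real (card {y. nn_adj x y}) \<le> 2 * real CARD('d)"
      using card_neighbours_le[of x] by linarith
    ultimately show ?thesis by (simp add: mult_right_mono)
  qed
  finally show ?thesis .
qed

lemma
  assumes "\<And>i. finite (I i)"
  shows finite_vec_Pi: "finite {x::'a^'n. \<forall>i. x$i \<in> I i}"
    and card_vec_Pi: "card {x::'a^'n. \<forall>i. x$i \<in> I i} = (\<Prod>i\<in>UNIV. card (I i))"
proof -
  have eq: "{x::'a^'n. \<forall>i. x$i \<in> I i} = vec_lambda ` PiE UNIV I"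
  proof (intro set_eqI iffI)
    fix x :: "'a^'n" assume "x \<in> {x. \<forall>i. x$i \<in> I i}"
    then have "vec_nth x \<in> PiE UNIV I" by auto
    then show "x \<in> vec_lambda ` PiE UNIV I" by (metis image_eqI vec_nth_inverse)
  qed auto
  have "inj_on vec_lambda (PiE UNIV I :: ('n \<Rightarrow> 'a) set)" by (auto intro: inj_onI)
  then show "finite {x::'a^'n. \<forall>i. x$i \<in> I i}" "card {x::'a^'n. \<forall>i. x$i \<in> I i} = (\<Prod>i\<in>UNIV. card (I i))"
    unfolding eq using assms by (simp_all add: finite_PiE card_image card_PiE)
qed

lemma box_eq_vec_Pi: "box n = {x. \<forall>i. x$i \<in> {-int n..int n}}"
  unfolding box_def by (auto simp: abs_le_iff) (use minus_le_iff in blast)+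

lemma finite_box: "finite (box n)"
  unfolding box_eq_vec_Pi by (rule finite_vec_Pi) simp

lemma box_mono: "m \<le> n \<Longrightarrow> box m \<subseteq> box n"
  unfolding box_def by (clarsimp, meson of_nat_le_iff order_trans)

definition even_box :: "nat \<Rightarrow> (int^'d) set" where
  "even_box n = {x \<in> box n. even (\<Sum>j\<in>UNIV. x$j)}"

lemma even_box_subset: "even_box n \<subseteq> box n"
  unfolding even_box_def by auto

lemma finite_even_box: "finite (even_box n)"
  using finite_box finite_subset[OF even_box_subset] by blast

lemma even_box_not_adj: "x \<in> even_box n \<Longrightarrow> y \<in> even_box n \<Longrightarrow> \<not> nn_adj x y"
  unfolding even_box_def using nn_adj_odd_coordinate_sum[of x y] by auto

lemma card_box_minus_face:
  fixes i0 :: "'d::finite"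
  shows "card {x::int^'d. \<forall>i. x$i \<in> (if i = i0 then {-int n..int n - 1} else {-int n..int n})}
           = 2*n * (2*n + 1) ^ (CARD('d) - 1)"
proof -
  define I where "I i = (if i = i0 then {-int n..int n - 1} else {-int n..int n})" for i
  have "card {x::int^'d. \<forall>i. x$i \<in> I i} = (\<Prod>i\<in>UNIV. card (I i))"
    by (rule card_vec_Pi) (simp add: I_def)
  also have "\<dots> = card (I i0) * (\<Prod>i\<in>UNIV - {i0}. card (I i))"
    by (simp add: prod.remove)
  also have "(\<Prod>i\<in>UNIV - {i0}. card (I i)) = (\<Prod>i\<in>UNIV - {i0}. 2*n + 1)"
    unfolding I_def by (intro prod.cong) (auto simp: nat_add_distrib)
  also have "card (I i0) = 2*n" unfolding I_def by simp
  finally show ?thesis unfolding I_def by (simp add: card_Diff_singleton)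
qed

text \<open>The even points of the box minus its top face in direction \<open>i0\<close> lie in \<open>even_box n\<close>,
  and so do its odd points shifted by one in direction \<open>i0\<close>.\<close>

lemma card_even_box_ge_nat: "n * (2*n + 1) ^ (CARD('d) - 1) \<le> card (even_box n :: (int^'d) set)"
proof -
  fix i0 :: 'd
  define I where "I i = (if i = i0 then {-int n..int n - 1} else {-int n..int n})" for i
  define D where "D = {x::int^'d. \<forall>i. x$i \<in> I i}"
  have card_D: "card D = 2*n * (2*n + 1) ^ (CARD('d) - 1)"
    unfolding D_def I_def by (rule card_box_minus_face)
  have finD: "finite D" unfolding D_def by (rule finite_vec_Pi) (simp add: I_def)
  have "I i \<subseteq> {-int n..int n}" for i unfolding I_def by auto
  then have D_box: "D \<subseteq> box n" unfolding D_def box_eq_vec_Pi by blast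
  define D_even where "D_even = {x \<in> D. even (\<Sum>j\<in>UNIV. x$j)}"
  define D_odd where "D_odd = {x \<in> D. odd (\<Sum>j\<in>UNIV. x$j)}"
  have "D_even \<subseteq> even_box n" unfolding D_even_def even_box_def using D_box by auto
  then have card_even: "card D_even \<le> card (even_box n :: (int^'d) set)"
    by (rule card_mono[OF finite_even_box])
  have "shift x i0 1 \<in> even_box n" if "x \<in> D_odd" for x
  proof -
    have x: "x$i \<in> I i" for i using that unfolding D_odd_def D_def by blast
    have "shift x i0 1 $ i \<in> {-int n..int n}" for i
      using x[of i] unfolding I_def shift_def by (cases "i = i0") auto
    then have "shift x i0 1 \<in> box n" unfolding box_eq_vec_Pi by blast
    then show ?thesis using that unfolding even_box_def D_odd_def by (simp add: sum_shift)
  qed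
  moreover have "inj (\<lambda>x. shift x i0 1)"
  proof (rule injI)
    fix x y assume "shift x i0 1 = shift y i0 1"
    then have eq: "shift x i0 1 $ i = shift y i0 1 $ i" for i by simp
    have "x$i = y$i" for i using eq[of i] by (cases "i = i0") (auto simp: shift_def)
    then show "x = y" by (simp add: vec_eq_iff)
  qed
  ultimately have card_odd: "card D_odd \<le> card (even_box n :: (int^'d) set)"
    using card_inj_on_le[of "\<lambda>x. shift x i0 1" D_odd "even_box n"] finite_even_box
    by (auto simp: inj_on_def)
  have "D = D_even \<union> D_odd" "D_even \<inter> D_odd = {}" unfolding D_even_def D_odd_def by auto
  then have "card D = card D_even + card D_odd"
    using finD by (simp add: card_Un_disjoint)
  then show ?thesis using card_D card_even card_odd by simp
qed

lemma card_even_box_ge: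
  "2 ^ (CARD('d) - 1) * real n ^ CARD('d) \<le> real (card (even_box n :: (int^'d) set))"
proof -
  have "real n ^ CARD('d) = real n * real n ^ (CARD('d) - 1)"
    by (metis Suc_diff_1 power_Suc zero_less_card_finite)
  then have "2 ^ (CARD('d) - 1) * real n ^ CARD('d) = real n * (2 * real n) ^ (CARD('d) - 1)"
    by (simp add: power_mult_distrib)
  also have "\<dots> \<le> real n * (2 * real n + 1) ^ (CARD('d) - 1)"
    by (intro mult_left_mono power_mono) auto
  also have "\<dots> = real (n * (2*n + 1) ^ (CARD('d) - 1))" by (simp add: add.commute)
  also have "\<dots> \<le> real (card (even_box n :: (int^'d) set))"
    using card_even_box_ge_nat by (simp only: of_nat_le_iff)
  finally show ?thesis .
qed

definition star :: "int^'d \<Rightarrow> (int^'d) set set" where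
  "star x = (\<lambda>y. {x, y}) ` {y. nn_adj x y}"

lemma star_subset_nn_edges: "star x \<subseteq> nn_edges"
  unfolding star_def nn_edges_def by auto

lemma finite_star: "finite (star x)"
  unfolding star_def using finite_neighbours[of x] by simp

lemma star_nonempty: "star x \<noteq> {}"
  unfolding star_def using neighbours_nonempty by simp

lemma card_star_le: "card (star (x::int^'d)) \<le> 2 * CARD('d)"
  unfolding star_def
  using card_image_le[OF finite_neighbours, of "\<lambda>y. {x, y}" x] card_neighbours_le[of x] by linarith

lemma disjoint_family_on_star:
  assumes "\<And>x y. x \<in> S \<Longrightarrow> y \<in> S \<Longrightarrow> \<not> nn_adj x y"
  shows "disjoint_family_on star S"
  unfolding disjoint_family_on_def
proof (intro ballI impI)
  fix x x' assume "x \<in> S" "x' \<in> S" "x \<noteq> x'"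
  show "star x \<inter> star x' = {}"
  proof (rule ccontr)
    assume "star x \<inter> star x' \<noteq> {}"
    then obtain y y' where "nn_adj x y" "{x, y} = {x', y'}"
      unfolding star_def by auto
    then have "nn_adj x x'" using \<open>x \<noteq> x'\<close> by (auto simp: doubleton_eq_iff)
    then show False using assms \<open>x \<in> S\<close> \<open>x' \<in> S\<close> by blast
  qed
qed

lemma regvar_zero_halving:
  assumes rv: "regvar_zero F \<gamma>" and nonneg: "\<And>u. F u \<ge> 0" and q: "0 < q" "q < 1"
  obtains L u1 where "u1 > 0" and "\<And>u. u > 0 \<Longrightarrow> F u = u powr \<gamma> * L u"
    and "\<And>u. 0 < u \<Longrightarrow> u \<le> u1 \<Longrightarrow> L u > 0"
    and "\<And>u. 0 < u \<Longrightarrow> u \<le> u1 \<Longrightarrow> q * L u \<le> L (u / 2)"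
proof -
  obtain L where FL: "\<And>u. u > 0 \<Longrightarrow> F u = u powr \<gamma> * L u"
    and lim: "\<And>C. C > 0 \<Longrightarrow> ((\<lambda>u. L (C * u) / L u) \<longlongrightarrow> 1) (at_right 0)"
    using rv unfolding regvar_zero_def by blast
  have "eventually (\<lambda>u. L ((1/2) * u) / L u > q) (at_right 0)"
    using order_tendstoD(1)[OF lim[of "1/2"] q(2)] by simp
  then have "\<exists>b>0. \<forall>u>0. u < b \<longrightarrow> L ((1/2) * u) / L u > q"
    using eventually_at_right[of "0::real" 1] by simp
  then obtain b where b: "b > 0" and ratio: "\<And>u. 0 < u \<Longrightarrow> u < b \<Longrightarrow> L (u / 2) / L u > q"
    by auto
  have L_pos: "L u > 0" if "0 < u" "u \<le> b / 2" for u
  proof -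
    have "L (u / 2) / L u > q" using ratio[of u] that b by simp
    then have "L u \<noteq> 0" using q by auto
    moreover have "u powr \<gamma> * L u \<ge> 0" using FL[of u] nonneg[of u] that by simp
    ultimately show ?thesis using that by (simp add: zero_le_mult_iff)
  qed
  show ?thesis
  proof (rule that[of "b / 2" L])
    fix u assume u: "0 < u" "u \<le> b / 2"
    show "L u > 0" using L_pos[OF u] .
    show "q * L u \<le> L (u / 2)"
      using ratio[of u] u b L_pos[OF u] by (simp add: pos_less_divide_eq)
  qed (use b FL in auto)
qed

lemma dyadic_interval:
  fixes u u1 :: real
  assumes "0 < u" "u \<le> u1"
  obtains k where "u1 / 2 ^ Suc k < u" "u \<le> u1 / 2 ^ k"
proof -
  obtain n where "u1 / u < 2 ^ n" using real_arch_pow[of 2 "u1 / u"] by auto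
  then have ex: "\<exists>n. u1 / 2 ^ n < u" using assms by (auto simp: divide_less_eq mult.commute)
  define k where "k = (LEAST n. u1 / 2 ^ n < u)"
  have below: "u1 / 2 ^ k < u" unfolding k_def by (rule LeastI_ex[OF ex])
  have "k \<noteq> 0" using below assms by (intro notI) simp
  then obtain j where j: "k = Suc j" by (cases k) auto
  have "\<not> u1 / 2 ^ j < u" using not_less_Least[of j "\<lambda>n. u1 / 2 ^ n < u"] j k_def by simp
  then show ?thesis using that[of j] below j by simp
qed

text \<open>Potter's bound. Iterating the halving inequality gives \<open>L(u1/2^k) \<ge> 2^(-\<eta> k) L(u1)\<close>,
  and monotonicity of \<open>F\<close> interpolates between the dyadic points.\<close>

lemma regvar_zero_powr_lower_bound:
  assumes rv: "regvar_zero F \<gamma>" and mono: "mono F" and nonneg: "\<And>u. F u \<ge> 0"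
    and \<gamma>: "\<gamma> \<ge> 0" and \<eta>: "\<eta> > 0"
  obtains c u1 where "c > 0" and "u1 > 0" and "\<And>u. 0 < u \<Longrightarrow> u \<le> u1 \<Longrightarrow> c * u powr (\<gamma> + \<eta>) \<le> F u"
proof -
  define q where "q = (2::real) powr (-\<eta>)"
  have q: "0 < q" "q < 1" unfolding q_def using \<eta> powr_less_mono[of "-\<eta>" 0 2] by simp_all
  obtain u1 L where u1: "u1 > 0" and FL: "\<And>u. u > 0 \<Longrightarrow> F u = u powr \<gamma> * L u"
    and L_pos: "\<And>u. 0 < u \<Longrightarrow> u \<le> u1 \<Longrightarrow> L u > 0"
    and halving: "\<And>u. 0 < u \<Longrightarrow> u \<le> u1 \<Longrightarrow> q * L u \<le> L (u / 2)"
    using regvar_zero_halving[OF rv nonneg q] by metis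
  have dyadic: "q ^ k * L u1 \<le> L (u1 / 2 ^ k)" for k
  proof (induction k)
    case (Suc k)
    have "q ^ Suc k * L u1 \<le> q * L (u1 / 2 ^ k)"
      using Suc q by (simp add: mult_left_mono)
    also have "\<dots> \<le> L (u1 / 2 ^ k / 2)"
      using u1 by (intro halving) (auto simp: divide_le_eq)
    also have "u1 / 2 ^ k / 2 = u1 / 2 ^ Suc k" by simp
    finally show ?case .
  qed simp
  define c where "c = L u1 * u1 powr (-\<eta>) * 2 powr (-(\<gamma> + \<eta>))"
  have "c * u powr (\<gamma> + \<eta>) \<le> F u" if u: "0 < u" "u \<le> u1" for u
  proof -
    obtain k where k: "u1 / 2 ^ Suc k < u" "u \<le> u1 / 2 ^ k"
      using u by (rule dyadic_interval)
    define v where "v = u1 / 2 ^ Suc k"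
    have v: "0 < v" "v < u" "u / 2 \<le> v" using k u1 unfolding v_def by (auto simp: field_simps)
    have q_pow: "q ^ Suc k = (v / u1) powr \<eta>"
    proof -
      have "q ^ Suc k = q powr real (Suc k)" using q(1) by (rule powr_realpow[symmetric])
      also have "\<dots> = (2 powr real (Suc k)) powr (-\<eta>)"
        unfolding q_def by (simp add: powr_powr mult.commute)
      also have "\<dots> = (v / u1) powr \<eta>"
        unfolding v_def using u1 by (simp add: powr_add powr_realpow powr_minus_divide powr_divide)
      finally show ?thesis .
    qed
    have "c * u powr (\<gamma> + \<eta>) = L u1 * u1 powr (-\<eta>) * (u / 2) powr (\<gamma> + \<eta>)"
    proof -
      have "(u / 2) powr (\<gamma> + \<eta>) = u powr (\<gamma> + \<eta>) / 2 powr (\<gamma> + \<eta>)"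
        using u by (simp add: powr_divide)
      also have "\<dots> = 2 powr (-(\<gamma> + \<eta>)) * u powr (\<gamma> + \<eta>)"
        by (simp only: powr_minus divide_inverse mult.commute)
      finally show ?thesis unfolding c_def by (simp only: mult.assoc)
    qed
    also have "\<dots> \<le> L u1 * u1 powr (-\<eta>) * v powr (\<gamma> + \<eta>)"
      using v u \<gamma> \<eta> L_pos[of u1] u1 by (intro mult_left_mono powr_mono2) auto
    also have "\<dots> = v powr \<gamma> * (q ^ Suc k * L u1)"
      unfolding q_pow using v u1 by (simp add: powr_add powr_divide powr_minus field_simps)
    also have "\<dots> \<le> v powr \<gamma> * L v"
      unfolding v_def by (intro mult_left_mono dyadic) auto
    also have "\<dots> = F v" using FL[OF \<open>v > 0\<close>] by simp
    also have "\<dots> \<le> F u" using v by (intro monoD[OF mono]) simp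
    finally show ?thesis .
  qed
  moreover have "c > 0" unfolding c_def using L_pos[of u1] u1 by simp
  ultimately show ?thesis using that u1 by blast
qed

lemma summable_exp_neg_powr:
  assumes "C > 0" and "\<kappa> > 0"
  shows "summable (\<lambda>k::nat. exp (- C * real k powr \<kappa>))"
proof (rule summable_comparison_test_ev)
  have "((\<lambda>k::nat. real k ^ 2 * exp (- C * real k powr \<kappa>)) \<longlongrightarrow> 0) sequentially"
    using assms by real_asymp
  then have "eventually (\<lambda>k. real k ^ 2 * exp (- C * real k powr \<kappa>) < 1) sequentially"
    by (rule order_tendstoD) simp
  then show "eventually (\<lambda>k. norm (exp (- C * real k powr \<kappa>)) \<le> real k powr (-2)) sequentially"
    using eventually_gt_at_top[of 0]
  proof eventually_elim
    case (elim k)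
    then have "exp (- C * real k powr \<kappa>) \<le> 1 / real k ^ 2" by (simp add: field_simps)
    then show ?case by (simp add: powr_minus powr_realpow divide_inverse)
  qed
qed (simp add: summable_real_powr_iff)

lemma eventually_sequentially_dyadic:
  assumes "eventually (\<lambda>k. \<forall>n. 2 ^ k \<le> n \<and> n < 2 ^ (k + 1) \<longrightarrow> P n) sequentially"
  shows "eventually P sequentially"
proof -
  obtain K where K: "\<And>k n. k \<ge> K \<Longrightarrow> 2 ^ k \<le> n \<Longrightarrow> n < 2 ^ (k + 1) \<Longrightarrow> P n"
    using assms unfolding eventually_sequentially by blast
  show ?thesis unfolding eventually_sequentially
  proof (intro exI allI impI)
    fix n :: nat assume n: "2 ^ K \<le> n"
    then have "n \<ge> 1" by (meson one_le_numeral one_le_power order_trans)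
    then obtain k where k: "2 ^ k \<le> n" "n < 2 ^ (k + 1)" using ex_power_ivl1[of 2 n] by auto
    have "K \<le> k"
    proof (rule ccontr)
      assume "\<not> K \<le> k"
      then have "2 ^ (k + 1) \<le> (2::nat) ^ K" by (intro power_increasing) auto
      then show False using n k by simp
    qed
    then show "P n" using K k by blast
  qed
qed

text \<open>With \<open>F(a) = a^\<gamma>\<close> in dimension \<open>d\<close>, the threshold \<open>a_k\<close> for the box of side \<open>2^k\<close>
  satisfies \<open>2^(d-1) (2^k)^d F(a_k)^(2d) = (1 + \<epsilon>/2) ln (k ln 2)\<close>, which makes the
  failure probabilities \<open>(k ln 2)^-(1+\<epsilon>/2)\<close> summable.\<close>

definition dyadic_threshold :: "real \<Rightarrow> real \<Rightarrow> real \<Rightarrow> nat \<Rightarrow> real" where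
  "dyadic_threshold d \<gamma> \<epsilon> k =
     (2 powr (-(real k + 1) * d) * ((2 + \<epsilon>) * ln (real k * ln 2))) powr (1 / (2 * d * \<gamma>))"

lemma ln_mult_ln2_pos: "2 \<le> k \<Longrightarrow> ln (real k * ln 2) > 0"
proof -
  assume "2 \<le> k"
  then have "real k * ln 2 \<ge> 2 * (2/3)"
    using ln2_ge_two_thirds by (intro mult_mono) auto
  then show ?thesis by simp
qed

lemma dyadic_threshold_powr:
  assumes "d > 0" "\<gamma> > 0" "\<epsilon> > 0" "2 \<le> k"
  shows "dyadic_threshold d \<gamma> \<epsilon> k powr (2 * d * \<gamma>)
           = 2 powr (-(real k + 1) * d) * ((2 + \<epsilon>) * ln (real k * ln 2))"
  unfolding dyadic_threshold_def using assms ln_mult_ln2_pos[OF assms(4)]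
  by (simp add: powr_powr)

lemma dyadic_threshold_le:
  fixes d \<gamma> \<epsilon> :: real
  assumes d: "d > 0" and \<gamma>: "\<gamma> > 0" and \<epsilon>: "\<epsilon> > 0"
    and k: "2 \<le> k" "2 ^ k \<le> n" "n < 2 ^ (k + 1)"
  shows "dyadic_threshold d \<gamma> \<epsilon> k
           \<le> real n powr (- 1 / (2 * \<gamma>)) * ((2 + \<epsilon>) * ln (ln (real n))) powr (1 / (2 * d * \<gamma>))"
proof -
  define r where "r = 1 / (2 * d * \<gamma>)"
  have r: "r > 0" unfolding r_def using d \<gamma> by simp
  have "2 ^ k \<le> real n" "real n \<le> 2 ^ (k + 1)"
    using k by (metis less_imp_le of_nat_le_iff of_nat_numeral of_nat_power)+
  then have n_bounds: "2 ^ k \<le> real n" "real n \<le> 2 powr (real k + 1)"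
    using powr_realpow[of 2 "k + 1"] by (simp_all add: ac_simps)
  have log_pos: "ln (real k * ln 2) > 0" using k(1) by (rule ln_mult_ln2_pos)
  have "-(real k + 1) * d * r = (real k + 1) * (- 1 / (2 * \<gamma>))"
    unfolding r_def using d \<gamma> by (simp add: field_simps)
  then have "(2 powr (-(real k + 1) * d)) powr r = (2 powr (real k + 1)) powr (- 1 / (2 * \<gamma>))"
    by (simp only: powr_powr)
  also have "\<dots> \<le> real n powr (- 1 / (2 * \<gamma>))"
    using n_bounds \<gamma> order.strict_trans2[OF zero_less_power[of "2::nat" k] k(2)]
    by (intro powr_mono2') (auto simp: divide_nonneg_pos)
  finally have scale: "(2 powr (-(real k + 1) * d)) powr r \<le> real n powr (- 1 / (2 * \<gamma>))" .
  have "ln (ln ((2::real) ^ k)) \<le> ln (ln (real n))"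
    using n_bounds k by (intro ln_mono) auto
  then have "(2 + \<epsilon>) * ln (real k * ln 2) \<le> (2 + \<epsilon>) * ln (ln (real n))"
    using \<epsilon> by (simp add: ln_realpow)
  then have "((2 + \<epsilon>) * ln (real k * ln 2)) powr r \<le> ((2 + \<epsilon>) * ln (ln (real n))) powr r"
    using log_pos \<epsilon> r by (intro powr_mono2) auto
  with scale show ?thesis
    unfolding dyadic_threshold_def r_def[symmetric] using log_pos \<epsilon>
    by (simp add: powr_mult) (intro mult_mono; simp)
qed

locale iid_conductances = prob_space M for M :: "'a measure" +
  fixes W :: "(int^'d) set \<Rightarrow> 'a \<Rightarrow> real" and F :: "real \<Rightarrow> real"
  assumes indep: "indep_vars (\<lambda>_. borel) W nn_edges"
    and law: "\<And>e u. e \<in> nn_edges \<Longrightarrow> prob {\<omega> \<in> space M. W e \<omega> \<le> u} = F u"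
    and pos: "\<And>e \<omega>. e \<in> nn_edges \<Longrightarrow> \<omega> \<in> space M \<Longrightarrow> W e \<omega> > 0"
begin

definition low_edge :: "real \<Rightarrow> (int^'d) set \<Rightarrow> 'a set" where
  "low_edge a e = {\<omega> \<in> space M. W e \<omega> \<le> a}"

definition low_star :: "real \<Rightarrow> int^'d \<Rightarrow> 'a set" where
  "low_star a x = {\<omega> \<in> space M. \<forall>y. nn_adj x y \<longrightarrow> W {x, y} \<omega> \<le> a}"

lemma indep_low_edge: "indep_events (low_edge a) nn_edges"
  unfolding low_edge_def by (rule indep_eventsI_indep_vars[OF indep]) auto

lemma low_edge_sets: "e \<in> nn_edges \<Longrightarrow> low_edge a e \<in> events"
  using indep_low_edge by (auto simp: indep_events_def)

lemma low_star_eq_INT: "low_star a x = (\<Inter>e\<in>star x. low_edge a e)"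
  using star_nonempty[of x] unfolding low_star_def low_edge_def star_def by auto

lemma low_star_sets: "low_star a x \<in> events"
  unfolding low_star_eq_INT using star_subset_nn_edges[of x]
  by (intro sets.finite_INT finite_star star_nonempty low_edge_sets) auto

lemma prob_low_star: "prob (low_star a x) = F a ^ card (star x)"
proof -
  have "prob (low_star a x) = (\<Prod>e\<in>star x. prob (low_edge a e))"
    using indep_low_edge[of a] star_subset_nn_edges[of x] star_nonempty[of x] finite_star[of x]
    unfolding low_star_eq_INT indep_events_def by simp
  also have "\<dots> = (\<Prod>e\<in>star x. F a)"
    using law star_subset_nn_edges unfolding low_edge_def by (intro prod.cong) auto
  finally show ?thesis by simp
qed

lemma
  shows F_nonneg: "0 \<le> F u"
    and F_le_one: "F u \<le> 1"
    and F_mono: "u \<le> v \<Longrightarrow> F u \<le> F v"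
proof -
  obtain e where e: "e \<in> (nn_edges :: (int^'d) set set)"
    using star_nonempty star_subset_nn_edges by blast
  have F_eq: "F t = prob (low_edge t e)" for t using law e unfolding low_edge_def by auto
  show "0 \<le> F u" "F u \<le> 1" unfolding F_eq by auto
  show "u \<le> v \<Longrightarrow> F u \<le> F v" unfolding F_eq
    by (rule finite_measure_mono) (use low_edge_sets[OF e, of v] in \<open>auto simp: low_edge_def\<close>)
qed

lemma prob_low_star_ge: "F a ^ (2 * CARD('d)) \<le> prob (low_star a x)"
  unfolding prob_low_star by (rule power_decreasing[OF card_star_le]) (auto intro: F_nonneg F_le_one)

text \<open>Sites that are pairwise not adjacent have disjoint stars, so the corresponding
  events depend on disjoint families of independent conductances.\<close>

lemma indep_events_compl_low_star:
  assumes "\<And>x y. x \<in> S \<Longrightarrow> y \<in> S \<Longrightarrow> \<not> nn_adj x y"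
  shows "indep_events (\<lambda>x. space M - low_star a x) S"
proof -
  define G where "G x = sigma_sets (space M) (\<Union>e\<in>star x. {low_edge a e})" for x
  have "indep_sets (\<lambda>e. {low_edge a e}) (\<Union>x\<in>S. star x)"
    by (rule indep_sets_mono_index[OF _ indep_low_edge[of a, unfolded indep_events_def_alt]])
      (use star_subset_nn_edges in blast)
  then have indep_G: "indep_sets G S"
    unfolding G_def
    by (rule indep_sets_collect_sigma)
      (simp_all add: Int_stable_def disjoint_family_on_star[OF assms])
  have "space M - low_star a x \<in> G x" for x
  proof -
    have sub: "(\<Union>e\<in>star x. {low_edge a e}) \<subseteq> Pow (space M)" by (auto simp: low_edge_def)
    interpret G: sigma_algebra "space M" "G x"
      unfolding G_def by (rule sigma_algebra_sigma_sets[OF sub])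
    have "low_star a x \<in> G x"
      unfolding low_star_eq_INT G_def using finite_star star_nonempty
      by (intro G.finite_INT[unfolded G_def]) (auto intro: sigma_sets.Basic)
    then show ?thesis unfolding G_def by (rule sigma_sets.Compl)
  qed
  then show ?thesis unfolding indep_events_def_alt
    by (intro indep_sets_mono_sets[OF indep_G]) auto
qed

lemma prob_no_low_star_le:
  assumes "finite S" and "\<And>x y. x \<in> S \<Longrightarrow> y \<in> S \<Longrightarrow> \<not> nn_adj x y"
  shows "prob (\<Inter>x\<in>S. space M - low_star a x) \<le> exp (- real (card S) * F a ^ (2 * CARD('d)))"
proof (cases "S = {}")
  case False
  define p where "p = F a ^ (2 * CARD('d))"
  have "prob (\<Inter>x\<in>S. space M - low_star a x) = (\<Prod>x\<in>S. prob (space M - low_star a x))"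
    using indep_events_compl_low_star[OF assms(2)] assms(1) False by (auto simp: indep_events_def)
  also have "\<dots> = (\<Prod>x\<in>S. 1 - prob (low_star a x))"
    by (intro prod.cong) (auto simp: prob_compl low_star_sets)
  also have "\<dots> \<le> (\<Prod>x\<in>S. exp (- p))"
  proof (rule prod_mono)
    fix x
    have "1 - prob (low_star a x) \<le> 1 - p" using prob_low_star_ge unfolding p_def by simp
    also have "\<dots> \<le> exp (- p)" using exp_ge_add_one_self[of "-p"] by simp
    finally show "0 \<le> 1 - prob (low_star a x) \<and> 1 - prob (low_star a x) \<le> exp (- p)" by simp
  qed
  also have "\<dots> = exp (- real (card S) * p)" by (simp add: exp_of_nat_mult[symmetric])
  finally show ?thesis unfolding p_def .
qed simp

lemma lambda1_le_if_low_star: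
  assumes "\<omega> \<in> low_star a x" and "x \<in> box n"
  shows "lambda1 (\<lambda>e. W e \<omega>) n \<le> 2 * real CARD('d) * a"
proof (rule lambda1_le_conductance_bound[OF _ \<open>x \<in> box n\<close>])
  fix y z :: "int^'d" assume "nn_adj y z"
  then have "{y, z} \<in> nn_edges" unfolding nn_edges_def by blast
  then show "W {y, z} \<omega> \<ge> 0"
    using pos assms(1) unfolding low_star_def by (metis (no_types, lifting) less_imp_le mem_Collect_eq)
qed (use assms(1) in \<open>auto simp: low_star_def\<close>)

lemma AE_eventually_lambda1_le:
  fixes m :: "nat \<Rightarrow> nat" and a :: "nat \<Rightarrow> real"
  assumes summable: "summable (\<lambda>k. exp (- real (card (even_box (m k) :: (int^'d) set))
                                       * F (a k) ^ (2 * CARD('d))))"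
  shows "AE \<omega> in M. eventually (\<lambda>k. \<forall>n \<ge> m k. lambda1 (\<lambda>e. W e \<omega>) n \<le> 2 * real CARD('d) * a k)
                       sequentially"
proof -
  define A where "A k = space M - (\<Union>x\<in>(even_box (m k) :: (int^'d) set). low_star (a k) x)" for k
  have A_sets: "A k \<in> events" for k
    unfolding A_def using finite_even_box low_star_sets by blast
  have "prob (A k) \<le> exp (- real (card (even_box (m k) :: (int^'d) set)) * F (a k) ^ (2 * CARD('d)))"
    for k
  proof (cases "even_box (m k) = ({} :: (int^'d) set)")
    case False
    then have "A k = (\<Inter>x\<in>(even_box (m k) :: (int^'d) set). space M - low_star (a k) x)"
      unfolding A_def by auto
    then show ?thesis using prob_no_low_star_le[OF finite_even_box even_box_not_adj] by simp
  qed (simp add: A_def)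
  then have "summable (\<lambda>k. prob (A k))"
    by (intro summable_comparison_test'[OF summable]) auto
  then have "AE \<omega> in M. eventually (\<lambda>k. \<omega> \<in> space M - A k) sequentially"
    by (intro borel_cantelli_AE1) (auto simp: A_sets less_top[symmetric])
  then show ?thesis
  proof (rule AE_mp, intro AE_I2 impI)
    fix \<omega> assume \<omega>: "\<omega> \<in> space M" and ev: "eventually (\<lambda>k. \<omega> \<in> space M - A k) sequentially"
    from ev show "eventually (\<lambda>k. \<forall>n \<ge> m k. lambda1 (\<lambda>e. W e \<omega>) n \<le> 2 * real CARD('d) * a k)
                 sequentially"
    proof (rule eventually_mono, intro allI impI)
      fix k n assume "\<omega> \<in> space M - A k" and "m k \<le> n"
      then obtain x where "x \<in> (even_box (m k) :: (int^'d) set)" and "\<omega> \<in> low_star (a k) x"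
        unfolding A_def using \<omega> by auto
      moreover have "x \<in> box n"
        using \<open>x \<in> even_box (m k)\<close> even_box_subset box_mono[OF \<open>m k \<le> n\<close>] by blast
      ultimately show "lambda1 (\<lambda>e. W e \<omega>) n \<le> 2 * real CARD('d) * a k"
        by (intro lambda1_le_if_low_star)
    qed
  qed
qed

lemma summable_no_low_star_bound_powr:
  assumes c: "c > 0" and u1: "u1 > 0" and F_lower: "\<And>u. 0 < u \<Longrightarrow> u \<le> u1 \<Longrightarrow> c * u powr g \<le> F u"
    and \<beta>: "\<beta> < 0" and growth: "1 + 2 * \<beta> * g > 0"
  shows "summable (\<lambda>k. exp (- real (card (even_box k :: (int^'d) set))
                          * F (real k powr \<beta> / (2 * real CARD('d))) ^ (2 * CARD('d))))"
proof -
  define d where "d = real CARD('d)"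
  define N where "N = 2 * CARD('d)"
  define a where "a k = real k powr \<beta> / (2 * d)" for k :: nat
  define \<kappa> where "\<kappa> = d * (1 + 2 * \<beta> * g)"
  define C where "C = c ^ N / (2 * d) powr (2 * d * g)"
  have d: "d \<ge> 1" unfolding d_def by simp
  have key: "C * real k powr \<kappa> \<le> real (card (even_box k :: (int^'d) set)) * F (a k) ^ N"
    if k: "k \<ge> 1" and small: "a k \<le> u1" for k
  proof -
    have a_pos: "a k > 0" unfolding a_def using k d by simp
    have "C * real k powr \<kappa> = real k powr d * (c ^ N * a k powr (2 * d * g))"
      unfolding C_def \<kappa>_def a_def using k d
      by (simp add: powr_divide powr_powr powr_add[symmetric] field_simps)
    also have "\<dots> = real k ^ CARD('d) * (c * a k powr g) ^ N"
      using k a_pos unfolding d_def N_def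
      by (simp add: powr_realpow power_mult_distrib powr_power mult_ac)
    also have "\<dots> \<le> real (card (even_box k :: (int^'d) set)) * F (a k) ^ N"
    proof (intro mult_mono power_mono)
      have "real k ^ CARD('d) \<le> 2 ^ (CARD('d) - 1) * real k ^ CARD('d)"
        using mult_right_mono[of 1 "2 ^ (CARD('d) - 1)" "real k ^ CARD('d)"] by simp
      then show "real k ^ CARD('d) \<le> real (card (even_box k :: (int^'d) set))"
        using card_even_box_ge[of k, where 'd='d] by linarith
      show "c * a k powr g \<le> F (a k)" using F_lower a_pos small by blast
    qed (use c in auto)
    finally show ?thesis .
  qed
  have "(a \<longlongrightarrow> 0) sequentially" unfolding a_def using \<beta> d by real_asymp
  then have small: "eventually (\<lambda>k. a k < u1) sequentially" using u1 by (rule order_tendstoD(2))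
  have "C > 0" "\<kappa> > 0" unfolding C_def \<kappa>_def using c d growth by simp_all
  show ?thesis unfolding a_def[symmetric] d_def[symmetric] N_def[symmetric]
  proof (rule summable_comparison_test_ev[OF _ summable_exp_neg_powr[OF \<open>C > 0\<close> \<open>\<kappa> > 0\<close>]])
    show "eventually (\<lambda>k. norm (exp (- real (card (even_box k :: (int^'d) set)) * F (a k) ^ N))
            \<le> exp (- C * real k powr \<kappa>)) sequentially"
      using small eventually_ge_at_top[of 1]
    proof eventually_elim
      case (elim k)
      then show ?case using key[of k] by simp
    qed
  qed
qed

lemma AE_eventually_lambda1_le_powr:
  assumes c: "c > 0" and u1: "u1 > 0" and F_lower: "\<And>u. 0 < u \<Longrightarrow> u \<le> u1 \<Longrightarrow> c * u powr g \<le> F u"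
    and \<beta>: "\<beta> < 0" and growth: "1 + 2 * \<beta> * g > 0"
  shows "AE \<omega> in M. eventually (\<lambda>n. lambda1 (\<lambda>e. W e \<omega>) n \<le> real n powr \<beta>) sequentially"
proof -
  define a where "a k = real k powr \<beta> / (2 * real CARD('d))" for k :: nat
  have "AE \<omega> in M. eventually (\<lambda>k. \<forall>n \<ge> k.
          lambda1 (\<lambda>e. W e \<omega>) n \<le> 2 * real CARD('d) * a k) sequentially"
    using summable_no_low_star_bound_powr[OF assms] unfolding a_def
    by (rule AE_eventually_lambda1_le)
  then show ?thesis
  proof (rule AE_mp, intro AE_I2 impI)
    fix \<omega> assume "eventually (\<lambda>k. \<forall>n \<ge> k.
                     lambda1 (\<lambda>e. W e \<omega>) n \<le> 2 * real CARD('d) * a k) sequentially"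
    then show "eventually (\<lambda>n. lambda1 (\<lambda>e. W e \<omega>) n \<le> real n powr \<beta>) sequentially"
      by (rule eventually_mono) (simp add: a_def)
  qed
qed

lemma AE_eventually_lambda1_le_regvar:
  assumes rv: "regvar_zero F \<gamma>" and \<gamma>: "\<gamma> > 0" and \<delta>: "\<delta> > 0"
  shows "AE \<omega> in M. eventually (\<lambda>n. lambda1 (\<lambda>e. W e \<omega>) n
                      \<le> real n powr (- 1 / (2 * \<gamma>) + \<delta>)) sequentially"
proof -
  define \<delta>' where "\<delta>' = min \<delta> (1 / (4 * \<gamma>))"
  define \<beta> where "\<beta> = - 1 / (2 * \<gamma>) + \<delta>'"
  define \<eta> where "\<eta> = \<delta>' * \<gamma>\<^sup>2"
  have \<delta>': "0 < \<delta>'" "\<delta>' \<le> \<delta>" "\<delta>' \<le> 1 / (4 * \<gamma>)" unfolding \<delta>'_def using \<delta> \<gamma> by auto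
  have "\<beta> < 0" unfolding \<beta>_def using \<delta>'(3) \<gamma> by (simp add: field_simps)
  moreover have "1 + 2 * \<beta> * (\<gamma> + \<eta>) = \<delta>' * \<gamma> + 2 * \<delta>'\<^sup>2 * \<gamma>\<^sup>2"
    unfolding \<beta>_def \<eta>_def using \<gamma> by (simp add: field_simps power2_eq_square)
  then have "1 + 2 * \<beta> * (\<gamma> + \<eta>) > 0" using \<delta>' \<gamma> by (simp add: add_pos_pos)
  moreover have "mono F" by (rule monoI) (rule F_mono)
  moreover have "\<eta> > 0" unfolding \<eta>_def using \<delta>' \<gamma> by simp
  moreover obtain c u1 where "c > 0" "u1 > 0" "\<And>u. 0 < u \<Longrightarrow> u \<le> u1 \<Longrightarrow> c * u powr (\<gamma> + \<eta>) \<le> F u"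
    using regvar_zero_powr_lower_bound[OF rv \<open>mono F\<close> F_nonneg, of \<eta>] \<gamma> \<open>\<eta> > 0\<close>
    by (metis less_imp_le)
  ultimately have "AE \<omega> in M. eventually (\<lambda>n. lambda1 (\<lambda>e. W e \<omega>) n \<le> real n powr \<beta>) sequentially"
    by (intro AE_eventually_lambda1_le_powr)
  then show ?thesis
  proof (rule AE_mp, intro AE_I2 impI)
    fix \<omega> assume "eventually (\<lambda>n. lambda1 (\<lambda>e. W e \<omega>) n \<le> real n powr \<beta>) sequentially"
    with eventually_ge_at_top[of 1]
    show "eventually (\<lambda>n. lambda1 (\<lambda>e. W e \<omega>) n \<le> real n powr (- 1 / (2 * \<gamma>) + \<delta>)) sequentially"
    proof eventually_elim
      case (elim n)
      then show ?case
        using powr_mono[of \<beta> "- 1 / (2 * \<gamma>) + \<delta>" "real n"] \<delta>'(2) unfolding \<beta>_def by simp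
    qed
  qed
qed

lemma summable_no_low_star_bound_dyadic:
  assumes F_eq: "\<forall>a\<in>{0..1}. F a = a powr \<gamma>" and \<gamma>: "\<gamma> > 0" and \<epsilon>: "\<epsilon> > 0"
  shows "summable (\<lambda>k. exp (- real (card (even_box (2 ^ k) :: (int^'d) set))
                          * F (dyadic_threshold (real CARD('d)) \<gamma> \<epsilon> k) ^ (2 * CARD('d))))"
proof -
  define d where "d = real CARD('d)"
  define N where "N = 2 * CARD('d)"
  define s where "s = 1 + \<epsilon> / 2"
  define X where "X k = (2 + \<epsilon>) * ln (real k * ln 2)" for k :: nat
  define p where "p k = 2 powr (-(real k + 1) * d) * X k" for k :: nat
  define a where "a k = dyadic_threshold d \<gamma> \<epsilon> k" for k
  have d: "d \<ge> 1" unfolding d_def by simp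
  have X_pos: "X k > 0" if "k \<ge> 2" for k
    unfolding X_def using ln_mult_ln2_pos[OF that] \<epsilon> by simp
  have p_pos: "p k > 0" if "k \<ge> 2" for k unfolding p_def using X_pos[OF that] by simp
  have key: "exp (- real (card (even_box (2 ^ k) :: (int^'d) set)) * F (a k) ^ N)
               \<le> ln 2 powr (-s) * real k powr (-s)"
    if k: "k \<ge> 2" and p_le: "p k \<le> 1" for k
  proof -
    have a_powr: "a k powr (2 * d * \<gamma>) = p k"
      unfolding a_def p_def X_def using d \<gamma> \<epsilon> k by (intro dyadic_threshold_powr) auto
    have a_pos: "a k > 0"
      unfolding a_def dyadic_threshold_def using ln_mult_ln2_pos[OF k] \<epsilon> by simp
    have "a k \<le> 1"
    proof (rule ccontr)
      assume "\<not> a k \<le> 1"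
      then have "1 < a k powr (2 * d * \<gamma>)" using d \<gamma> by (intro gr_one_powr) auto
      then show False using a_powr p_le by simp
    qed
    then have "F (a k) ^ N = a k powr (2 * d * \<gamma>)"
      using F_eq a_pos unfolding N_def d_def by (simp add: powr_power mult_ac)
    then have F_pow: "F (a k) ^ N = p k" using a_powr by simp
    have "2 ^ (CARD('d) - 1) * real (2 ^ k) ^ CARD('d) * p k = X k / 2"
    proof -
      have "2 ^ (CARD('d) - 1) * real (2 ^ k) ^ CARD('d) = (2::real) powr (d - 1 + real k * d)"
        unfolding d_def by (simp add: powr_add powr_powr of_nat_diff flip: powr_realpow)
      then show ?thesis unfolding p_def
        by (simp add: powr_add[symmetric] algebra_simps powr_minus_divide)
    qed
    then have "X k / 2 \<le> real (card (even_box (2 ^ k) :: (int^'d) set)) * F (a k) ^ N"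
      unfolding F_pow using card_even_box_ge[of "2 ^ k", where 'd='d] p_pos[OF k]
      by (metis mult_right_mono less_imp_le)
    then have "exp (- real (card (even_box (2 ^ k) :: (int^'d) set)) * F (a k) ^ N) \<le> exp (- (X k / 2))"
      by simp
    also have "\<dots> = (real k * ln 2) powr (-s)"
      using X_pos[OF k] k unfolding X_def s_def powr_def by (simp add: field_simps)
    finally show ?thesis by (simp add: powr_mult mult.commute)
  qed
  have "(p \<longlongrightarrow> 0) sequentially" unfolding p_def X_def using d \<epsilon> by real_asymp
  then have small: "eventually (\<lambda>k. p k < 1) sequentially" by (rule order_tendstoD) simp
  have "summable (\<lambda>k::nat. ln 2 powr (-s) * real k powr (-s))"
    unfolding s_def using \<epsilon> by (intro summable_mult) (simp add: summable_real_powr_iff)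
  then show ?thesis unfolding a_def[symmetric] d_def[symmetric] N_def[symmetric]
  proof (rule summable_comparison_test_ev[rotated])
    show "eventually (\<lambda>k. norm (exp (- real (card (even_box (2 ^ k) :: (int^'d) set)) * F (a k) ^ N))
            \<le> ln 2 powr (-s) * real k powr (-s)) sequentially"
      using small eventually_ge_at_top[of 2]
    proof eventually_elim
      case (elim k)
      then show ?case using key[of k] by simp
    qed
  qed
qed

lemma AE_eventually_lambda1_le_iterated_log:
  assumes F_eq: "\<forall>a\<in>{0..1}. F a = a powr \<gamma>" and \<gamma>: "\<gamma> > 0" and \<epsilon>: "\<epsilon> > 0"
  shows "AE \<omega> in M. eventually (\<lambda>n. lambda1 (\<lambda>e. W e \<omega>) n
           \<le> 2 * real CARD('d) * real n powr (- 1 / (2 * \<gamma>))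
             * ((2 + \<epsilon>) * ln (ln (real n))) powr (1 / (2 * real CARD('d) * \<gamma>))) sequentially"
proof -
  define d where "d = real CARD('d)"
  define bound where "bound n = 2 * d * (real n powr (- 1 / (2 * \<gamma>))
                                  * ((2 + \<epsilon>) * ln (ln (real n))) powr (1 / (2 * d * \<gamma>)))" for n :: nat
  have d: "d \<ge> 1" unfolding d_def by simp
  have "AE \<omega> in M. eventually (\<lambda>k. \<forall>n \<ge> 2 ^ k.
          lambda1 (\<lambda>e. W e \<omega>) n \<le> 2 * d * dyadic_threshold d \<gamma> \<epsilon> k) sequentially"
    unfolding d_def using summable_no_low_star_bound_dyadic[OF F_eq \<gamma> \<epsilon>]
    by (rule AE_eventually_lambda1_le)
  then show ?thesis
  proof (rule AE_mp, intro AE_I2 impI)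
    fix \<omega> assume "eventually (\<lambda>k. \<forall>n \<ge> 2 ^ k.
                     lambda1 (\<lambda>e. W e \<omega>) n \<le> 2 * d * dyadic_threshold d \<gamma> \<epsilon> k) sequentially"
    with eventually_ge_at_top[of 2]
    have "eventually (\<lambda>k. \<forall>n. 2 ^ k \<le> n \<and> n < 2 ^ (k + 1) \<longrightarrow> lambda1 (\<lambda>e. W e \<omega>) n \<le> bound n)
            sequentially"
    proof eventually_elim
      case (elim k)
      show ?case
      proof (intro allI impI)
        fix n :: nat assume n: "2 ^ k \<le> n \<and> n < 2 ^ (k + 1)"
        have "2 * d * dyadic_threshold d \<gamma> \<epsilon> k \<le> bound n"
          unfolding bound_def using dyadic_threshold_le[of d \<gamma> \<epsilon> k n] d \<gamma> \<epsilon> elim n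
          by (intro mult_left_mono) auto
        then show "lambda1 (\<lambda>e. W e \<omega>) n \<le> bound n" using elim n by force
      qed
    qed
    then show "eventually (\<lambda>n. lambda1 (\<lambda>e. W e \<omega>) n
           \<le> 2 * real CARD('d) * real n powr (- 1 / (2 * \<gamma>))
             * ((2 + \<epsilon>) * ln (ln (real n))) powr (1 / (2 * real CARD('d) * \<gamma>))) sequentially"
      unfolding bound_def d_def by (rule eventually_mono[OF eventually_sequentially_dyadic]) (simp add: mult_ac)
  qed
qed

end

theorem corollary1p2:
  fixes M :: "'a measure" and W :: "(int^'d) set \<Rightarrow> 'a \<Rightarrow> real"
    and F :: "real \<Rightarrow> real" and \<gamma> \<delta> :: real
  assumes d2: "CARD('d) \<ge> 2"
    and P: "prob_space M"
    and indep: "prob_space.indep_vars M (\<lambda>_. borel) W (nn_edges :: (int^'d) set set)"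
    and pos: "\<forall>e\<in>nn_edges. \<forall>\<omega>\<in>space M. W e \<omega> > 0"
    and law: "\<forall>e\<in>nn_edges. \<forall>u. measure M {\<omega>\<in>space M. W e \<omega> \<le> u} = F u"
    and rv: "regvar_zero F \<gamma>" and gpos: "\<gamma> > 0"
    and dpos: "\<delta> > 0"
  shows "(AE \<omega> in M. eventually (\<lambda>n. lambda1 (\<lambda>e. W e \<omega>) n
                 \<le> real n powr (- 1 / (2 * \<gamma>) + \<delta>)) sequentially)
    \<and> ((\<forall>a\<in>{0..1}. F a = a powr \<gamma>) \<longrightarrow>
        (\<forall>\<epsilon>>0. AE \<omega> in M. eventually (\<lambda>n. lambda1 (\<lambda>e. W e \<omega>) n
           \<le> 2 * real CARD('d) * real n powr (- 1 / (2 * \<gamma>))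
             * ((2 + \<epsilon>) * ln (ln (real n))) powr (1 / (2 * real CARD('d) * \<gamma>))) sequentially))"
proof -
  interpret iid_conductances M W F
  proof (intro iid_conductances.intro iid_conductances_axioms.intro P)
  qed (use indep pos law in auto)
  show ?thesis
    by (intro conjI impI allI AE_eventually_lambda1_le_regvar[OF rv gpos dpos]
        AE_eventually_lambda1_le_iterated_log[OF _ gpos])
qed

end
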